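(* Let $\varphi$ be any first-order formula in negation-normal form. Then $\varphi^N \rightarrow \varphi^{\mathit{awk}}$ is provable in minimal logic. Consequently, for formulas $\varphi$ in negation-normal form in the language of arithmetic, Peano arithmetic $\mathsf{PA}$ proves $\varphi$ if and only if $\mathsf{HA'}$ proves $\varphi^{\mathit{awk}}$.
   Context: Logical symbols are $\forall,\exists,\land,\lor,\rightarrow,\bot$, with $\lnot\varphi$ defined as $\varphi\rightarrow\bot$. Minimal logic is intuitionistic logic without ex falso (from $\bot$ infer anything). A formula is in negation-normal form if it is built from atomic and negated atomic formulas using $\land,\lor,\forall,\exists$. For such $\varphi$, the classical negation $\sim\varphi$ is obtained from $\varphi$ by exchanging $\land$ with $\lor$, $\forall$ with $\exists$, and each atomic formula with its negation (so $\sim\sim\varphi$ is $\varphi$). The awkward translation is $\varphi^{\mathit{awk}} := \lnot(\sim\varphi)$. The Gödel–Gentzen translation $\varphi^N$ is defined by: $\bot^N=\bot$; $\theta^N=\lnot\lnot\theta$ for atomic $\theta$; $(\varphi\land\psi)^N=\varphi^N\land\psi^N$; $(\varphi\lor\psi)^N=\lnot(\lnot\varphi^N\land\lnot\psi^N)$; $(\varphi\rightarrow\psi)^N=\varphi^N\rightarrow\psi^N$; $(\forall x\varphi)^N=\forall x\varphi^N$; $(\exists x\varphi)^N=\lnot\forall x\lnot\varphi^N$. $\mathsf{PA}$ is classical first-order arithmetic; $\mathsf{HA'}$ denotes Heyting arithmetic formulated over minimal logic (the language containing symbols for the primitive recursive functions, so that every negated atomic formula has an atomic equivalent). *)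

theory Defs
  imports Main
begin

section \<open>First-order syntax (de Bruijn indices)\<close>

datatype 'f trm = Var nat | Fn 'f "'f trm list"

datatype ('f, 'p) fm =
    Bot
  | Atom 'p "'f trm list"
  | And "('f, 'p) fm" "('f, 'p) fm"
  | Or "('f, 'p) fm" "('f, 'p) fm"
  | Imp "('f, 'p) fm" "('f, 'p) fm"
  | All "('f, 'p) fm"
  | Ex "('f, 'p) fm"

abbreviation Neg :: "('f, 'p) fm \<Rightarrow> ('f, 'p) fm" where
  "Neg \<phi> \<equiv> Imp \<phi> Bot"

primrec liftt :: "nat \<Rightarrow> 'f trm \<Rightarrow> 'f trm" where
  "liftt k (Var i) = (if i < k then Var i else Var (Suc i))"
| "liftt k (Fn f ts) = Fn f (map (liftt k) ts)"

primrec substt :: "nat \<Rightarrow> 'f trm \<Rightarrow> 'f trm \<Rightarrow> 'f trm" where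
  "substt k s (Var i) = (if i < k then Var i else if i = k then s else Var (i - 1))"
| "substt k s (Fn f ts) = Fn f (map (substt k s) ts)"

primrec liftf :: "nat \<Rightarrow> ('f, 'p) fm \<Rightarrow> ('f, 'p) fm" where
  "liftf k Bot = Bot"
| "liftf k (Atom p ts) = Atom p (map (liftt k) ts)"
| "liftf k (And \<phi> \<psi>) = And (liftf k \<phi>) (liftf k \<psi>)"
| "liftf k (Or \<phi> \<psi>) = Or (liftf k \<phi>) (liftf k \<psi>)"
| "liftf k (Imp \<phi> \<psi>) = Imp (liftf k \<phi>) (liftf k \<psi>)"
| "liftf k (All \<phi>) = All (liftf (Suc k) \<phi>)"
| "liftf k (Ex \<phi>) = Ex (liftf (Suc k) \<phi>)"

primrec substf :: "nat \<Rightarrow> 'f trm \<Rightarrow> ('f, 'p) fm \<Rightarrow> ('f, 'p) fm" where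
  "substf k s Bot = Bot"
| "substf k s (Atom p ts) = Atom p (map (substt k s) ts)"
| "substf k s (And \<phi> \<psi>) = And (substf k s \<phi>) (substf k s \<psi>)"
| "substf k s (Or \<phi> \<psi>) = Or (substf k s \<phi>) (substf k s \<psi>)"
| "substf k s (Imp \<phi> \<psi>) = Imp (substf k s \<phi>) (substf k s \<psi>)"
| "substf k s (All \<phi>) = All (substf (Suc k) (liftt 0 s) \<phi>)"
| "substf k s (Ex \<phi>) = Ex (substf (Suc k) (liftt 0 s) \<phi>)"

text \<open>deriv cl Ax Gamma phi: phi is derivable from the hypotheses Gamma, using
  the non-logical axioms Ax (axiom schemas, closed under substitution, so their free
  variables behave as universally quantified). If cl is False the logic is minimal
  logic (no ex falso); if cl is True the double-negation rule is added, giving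
  classical logic.\<close>
inductive deriv :: "bool \<Rightarrow> ('f, 'p) fm set \<Rightarrow> ('f, 'p) fm set \<Rightarrow> ('f, 'p) fm \<Rightarrow> bool"
  for cl :: bool and Ax :: "('f, 'p) fm set" where
  Axiom: "\<phi> \<in> Ax \<Longrightarrow> deriv cl Ax \<Gamma> \<phi>"
| Hyp: "\<phi> \<in> \<Gamma> \<Longrightarrow> deriv cl Ax \<Gamma> \<phi>"
| AndI: "deriv cl Ax \<Gamma> \<phi> \<Longrightarrow> deriv cl Ax \<Gamma> \<psi> \<Longrightarrow> deriv cl Ax \<Gamma> (And \<phi> \<psi>)"
| AndE1: "deriv cl Ax \<Gamma> (And \<phi> \<psi>) \<Longrightarrow> deriv cl Ax \<Gamma> \<phi>"
| AndE2: "deriv cl Ax \<Gamma> (And \<phi> \<psi>) \<Longrightarrow> deriv cl Ax \<Gamma> \<psi>"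
| OrI1: "deriv cl Ax \<Gamma> \<phi> \<Longrightarrow> deriv cl Ax \<Gamma> (Or \<phi> \<psi>)"
| OrI2: "deriv cl Ax \<Gamma> \<psi> \<Longrightarrow> deriv cl Ax \<Gamma> (Or \<phi> \<psi>)"
| OrE: "deriv cl Ax \<Gamma> (Or \<phi> \<psi>) \<Longrightarrow> deriv cl Ax (insert \<phi> \<Gamma>) \<chi> \<Longrightarrow>
        deriv cl Ax (insert \<psi> \<Gamma>) \<chi> \<Longrightarrow> deriv cl Ax \<Gamma> \<chi>"
| ImpI: "deriv cl Ax (insert \<phi> \<Gamma>) \<psi> \<Longrightarrow> deriv cl Ax \<Gamma> (Imp \<phi> \<psi>)"
| ImpE: "deriv cl Ax \<Gamma> (Imp \<phi> \<psi>) \<Longrightarrow> deriv cl Ax \<Gamma> \<phi> \<Longrightarrow> deriv cl Ax \<Gamma> \<psi>"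
| AllI: "deriv cl Ax (liftf 0 ` \<Gamma>) \<phi> \<Longrightarrow> deriv cl Ax \<Gamma> (All \<phi>)"
| AllE: "deriv cl Ax \<Gamma> (All \<phi>) \<Longrightarrow> deriv cl Ax \<Gamma> (substf 0 t \<phi>)"
| ExI: "deriv cl Ax \<Gamma> (substf 0 t \<phi>) \<Longrightarrow> deriv cl Ax \<Gamma> (Ex \<phi>)"
| ExE: "deriv cl Ax \<Gamma> (Ex \<phi>) \<Longrightarrow> deriv cl Ax (insert \<phi> (liftf 0 ` \<Gamma>)) (liftf 0 \<psi>) \<Longrightarrow>
        deriv cl Ax \<Gamma> \<psi>"
| DNE: "cl \<Longrightarrow> deriv cl Ax \<Gamma> (Neg (Neg \<phi>)) \<Longrightarrow> deriv cl Ax \<Gamma> \<phi>"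

abbreviation minimal_provable :: "('f, 'p) fm \<Rightarrow> bool" where
  "minimal_provable \<phi> \<equiv> deriv False {} {} \<phi>"

fun nnf :: "('f, 'p) fm \<Rightarrow> bool" where
  "nnf (Atom p ts) = True"
| "nnf (Imp (Atom p ts) Bot) = True"
| "nnf (And \<phi> \<psi>) = (nnf \<phi> \<and> nnf \<psi>)"
| "nnf (Or \<phi> \<psi>) = (nnf \<phi> \<and> nnf \<psi>)"
| "nnf (All \<phi>) = nnf \<phi>"
| "nnf (Ex \<phi>) = nnf \<phi>"
| "nnf _ = False"

fun cneg :: "('f, 'p) fm \<Rightarrow> ('f, 'p) fm" where
  "cneg (Atom p ts) = Neg (Atom p ts)"
| "cneg (Imp (Atom p ts) Bot) = Atom p ts"
| "cneg (And \<phi> \<psi>) = Or (cneg \<phi>) (cneg \<psi>)"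
| "cneg (Or \<phi> \<psi>) = And (cneg \<phi>) (cneg \<psi>)"
| "cneg (All \<phi>) = Ex (cneg \<phi>)"
| "cneg (Ex \<phi>) = All (cneg \<phi>)"
| "cneg \<phi> = Neg \<phi>"  (* irrelevant: outside negation normal form *)

definition awk :: "('f, 'p) fm \<Rightarrow> ('f, 'p) fm" where
  "awk \<phi> = Neg (cneg \<phi>)"

primrec gg :: "('f, 'p) fm \<Rightarrow> ('f, 'p) fm" where
  "gg Bot = Bot"
| "gg (Atom p ts) = Neg (Neg (Atom p ts))"
| "gg (And \<phi> \<psi>) = And (gg \<phi>) (gg \<psi>)"
| "gg (Or \<phi> \<psi>) = Neg (And (Neg (gg \<phi>)) (Neg (gg \<psi>)))"
| "gg (Imp \<phi> \<psi>) = Imp (gg \<phi>) (gg \<psi>)"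
| "gg (All \<phi>) = All (gg \<phi>)"
| "gg (Ex \<phi>) = Neg (All (Neg (gg \<phi>)))"

text \<open>Codes of primitive recursive functions: Comp m f gs is the m-ary composition
  of f with gs; Rec f g is h with h 0 xs = f xs and h (S x) xs = g (h x xs) x xs.\<close>
datatype prfn = Zero | Succ | Proj nat nat | Comp nat prfn "prfn list" | Rec prfn prfn

primrec arity :: "prfn \<Rightarrow> nat" where
  "arity Zero = 0"
| "arity Succ = 1"
| "arity (Proj n i) = n"
| "arity (Comp m f gs) = m"
| "arity (Rec f g) = Suc (arity f)"

fun wf_prf :: "prfn \<Rightarrow> bool" where
  "wf_prf Zero = True"
| "wf_prf Succ = True"
| "wf_prf (Proj n i) = (i < n)"
| "wf_prf (Comp m f gs) = (wf_prf f \<and> length gs = arity f \<and>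
      (\<forall>g\<in>set gs. wf_prf g \<and> arity g = m))"
| "wf_prf (Rec f g) = (wf_prf f \<and> wf_prf g \<and> arity g = Suc (Suc (arity f)))"

datatype apred = EqP

type_synonym afm = "(prfn, apred) fm"

fun wf_trm :: "prfn trm \<Rightarrow> bool" where
  "wf_trm (Var i) = True"
| "wf_trm (Fn f ts) = (wf_prf f \<and> length ts = arity f \<and> (\<forall>t\<in>set ts. wf_trm t))"

fun wf_afm :: "afm \<Rightarrow> bool" where
  "wf_afm Bot = True"
| "wf_afm (Atom p ts) = (length ts = 2 \<and> (\<forall>t\<in>set ts. wf_trm t))"
| "wf_afm (And \<phi> \<psi>) = (wf_afm \<phi> \<and> wf_afm \<psi>)"
| "wf_afm (Or \<phi> \<psi>) = (wf_afm \<phi> \<and> wf_afm \<psi>)"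
| "wf_afm (Imp \<phi> \<psi>) = (wf_afm \<phi> \<and> wf_afm \<psi>)"
| "wf_afm (All \<phi>) = wf_afm \<phi>"
| "wf_afm (Ex \<phi>) = wf_afm \<phi>"

abbreviation Eq :: "prfn trm \<Rightarrow> prfn trm \<Rightarrow> afm" where
  "Eq t s \<equiv> Atom EqP [t, s]"

abbreviation zero :: "prfn trm" where "zero \<equiv> Fn Zero []"
abbreviation suc :: "prfn trm \<Rightarrow> prfn trm" where "suc t \<equiv> Fn Succ [t]"

inductive_set arith_ax :: "afm set" where
  eq_refl: "wf_trm t \<Longrightarrow> Eq t t \<in> arith_ax"
| eq_subst: "wf_trm t \<Longrightarrow> wf_trm s \<Longrightarrow> wf_afm \<phi> \<Longrightarrow>
     Imp (Eq t s) (Imp (substf 0 t \<phi>) (substf 0 s \<phi>)) \<in> arith_ax"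
| suc_ne_zero: "wf_trm t \<Longrightarrow> Neg (Eq (suc t) zero) \<in> arith_ax"
| suc_inj: "wf_trm t \<Longrightarrow> wf_trm s \<Longrightarrow> Imp (Eq (suc t) (suc s)) (Eq t s) \<in> arith_ax"
| proj_def: "wf_prf (Proj n i) \<Longrightarrow> length ts = n \<Longrightarrow> \<forall>t\<in>set ts. wf_trm t \<Longrightarrow>
     Eq (Fn (Proj n i) ts) (ts ! i) \<in> arith_ax"
| comp_def: "wf_prf (Comp m f gs) \<Longrightarrow> length ts = m \<Longrightarrow> \<forall>t\<in>set ts. wf_trm t \<Longrightarrow>
     Eq (Fn (Comp m f gs) ts) (Fn f (map (\<lambda>g. Fn g ts) gs)) \<in> arith_ax"
| rec_zero: "wf_prf (Rec f g) \<Longrightarrow> length ts = arity f \<Longrightarrow> \<forall>t\<in>set ts. wf_trm t \<Longrightarrow>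
     Eq (Fn (Rec f g) (zero # ts)) (Fn f ts) \<in> arith_ax"
| rec_suc: "wf_prf (Rec f g) \<Longrightarrow> length ts = arity f \<Longrightarrow> \<forall>t\<in>set ts. wf_trm t \<Longrightarrow>
     wf_trm x \<Longrightarrow>
     Eq (Fn (Rec f g) (suc x # ts)) (Fn g (Fn (Rec f g) (x # ts) # x # ts)) \<in> arith_ax"
| induction: "wf_afm \<phi> \<Longrightarrow>
     Imp (And (substf 0 zero \<phi>) (All (Imp \<phi> (substf 0 (suc (Var 0)) (liftf 1 \<phi>)))))
         (All \<phi>) \<in> arith_ax"

definition HA' :: "afm \<Rightarrow> bool" where
  "HA' \<phi> \<longleftrightarrow> deriv False arith_ax {} \<phi>"

definition PA :: "afm \<Rightarrow> bool" where
  "PA \<phi> \<longleftrightarrow> deriv True arith_ax {} \<phi>"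

end

theory Submission
  imports Defs
begin

text \<open>In minimal logic \<open>gg \<phi>\<close> and \<open>cneg \<phi>\<close> refute each other, by induction on the
  negation-normal formula \<open>\<phi>\<close>: each connective of \<open>cneg \<phi>\<close> is the De Morgan dual of the
  corresponding one of \<open>\<phi>\<close>, and the Goedel--Gentzen translation of a connective is refuted
  by its dual. For arithmetic, the translation turns classical derivations into minimal ones,
  because translated formulas are stable under double negation and the translated axioms of
  \<open>HA'\<close> are provable in \<open>HA'\<close>; so \<open>PA \<turnstile> \<phi>\<close> gives \<open>HA' \<turnstile> gg \<phi>\<close> and hence
  \<open>HA' \<turnstile> awk \<phi>\<close>. Conversely \<open>awk \<phi>\<close> classically implies \<open>\<phi>\<close>, since \<open>\<not> \<phi>\<close>
  classically implies \<open>cneg \<phi>\<close>.\<close>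

lemma substt_Var_liftt: "substt k (Var k) (liftt (Suc k) t) = t"
  by (induction t) (auto intro: map_idI)

lemma substf_Var_liftf: "substf k (Var k) (liftf (Suc k) \<phi>) = \<phi>"
  by (induction \<phi> arbitrary: k) (auto simp: substt_Var_liftt intro: map_idI)

lemma gg_liftf: "gg (liftf k \<phi>) = liftf k (gg \<phi>)"
  by (induction \<phi> arbitrary: k) auto

lemma gg_substf: "gg (substf k t \<phi>) = substf k t (gg \<phi>)"
  by (induction \<phi> arbitrary: k t) auto

lemma wf_afm_gg: "wf_afm \<phi> \<Longrightarrow> wf_afm (gg \<phi>)"
  by (induction \<phi>) auto

lemma nnf_ImpD: "nnf (Imp \<phi> \<psi>) \<Longrightarrow> \<exists>p ts. \<phi> = Atom p ts \<and> \<psi> = Bot"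
  by (cases \<phi>; cases \<psi>) auto

lemma deriv_mono:
  "deriv cl Ax \<Gamma> \<phi> \<Longrightarrow> (cl \<longrightarrow> cl') \<Longrightarrow> Ax \<subseteq> Ax' \<Longrightarrow> \<Gamma> \<subseteq> \<Delta> \<Longrightarrow> deriv cl' Ax' \<Delta> \<phi>"
proof (induction arbitrary: \<Delta> rule: deriv.induct)
  case (AllI \<Gamma> \<phi>) then show ?case by (meson deriv.AllI image_mono)
next
  case (OrE \<Gamma> \<phi> \<psi> \<chi>) then show ?case by (meson deriv.OrE insert_mono)
next
  case (ImpI \<phi> \<Gamma> \<psi>) then show ?case by (meson deriv.ImpI insert_mono)
next
  case (ExE \<Gamma> \<phi> \<psi>) then show ?case by (meson deriv.ExE insert_mono image_mono)
next
  case (ExI \<Gamma> t \<phi>) then show ?case by (meson deriv.ExI)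
qed (auto intro: deriv.intros)

lemma deriv_weaken: "deriv cl Ax \<Gamma> \<phi> \<Longrightarrow> \<Gamma> \<subseteq> \<Delta> \<Longrightarrow> deriv cl Ax \<Delta> \<phi>"
  using deriv_mono by blast

lemma deriv_insert: "deriv cl Ax \<Gamma> \<phi> \<Longrightarrow> deriv cl Ax (insert \<psi> \<Gamma>) \<phi>"
  by (erule deriv_weaken) blast

lemma deriv_assumption: "deriv cl Ax (insert \<phi> \<Gamma>) \<phi>"
  by (rule deriv.Hyp) simp

lemma deriv_cut: "deriv cl Ax \<Gamma> \<psi> \<Longrightarrow> deriv cl Ax (insert \<psi> \<Gamma>) \<phi> \<Longrightarrow> deriv cl Ax \<Gamma> \<phi>"
  by (rule deriv.ImpE[OF deriv.ImpI])

lemma deriv_contra: "deriv cl Ax \<Gamma> \<phi> \<Longrightarrow> Neg \<phi> \<in> \<Gamma> \<Longrightarrow> deriv cl Ax \<Gamma> Bot"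
  by (rule deriv.ImpE[OF deriv.Hyp])

lemma deriv_ccontr: "deriv True Ax (insert (Neg \<phi>) \<Gamma>) Bot \<Longrightarrow> deriv True Ax \<Gamma> \<phi>"
  by (rule deriv.DNE[OF _ deriv.ImpI]) simp_all

lemma deriv_dnegI: "deriv cl Ax \<Gamma> \<phi> \<Longrightarrow> deriv cl Ax \<Gamma> (Neg (Neg \<phi>))"
  by (rule deriv.ImpI, rule deriv.ImpE[OF deriv_assumption], erule deriv_insert)

lemma deriv_dneg_map:
  assumes "deriv cl Ax \<Gamma> (Neg (Neg \<phi>))" and "deriv cl Ax \<Gamma> (Imp \<phi> \<psi>)"
  shows "deriv cl Ax \<Gamma> (Neg (Neg \<psi>))"
proof (rule deriv.ImpI)
  let ?\<Gamma> = "insert (Neg \<psi>) \<Gamma>"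
  have "deriv cl Ax (insert \<phi> ?\<Gamma>) \<psi>"
    by (rule deriv.ImpE[OF deriv_insert[OF deriv_insert[OF assms(2)]] deriv_assumption])
  then have "deriv cl Ax ?\<Gamma> (Neg \<phi>)"
    by (rule deriv.ImpI[OF deriv.ImpE[OF deriv_insert[OF deriv_assumption]]])
  with deriv_insert[OF assms(1)] show "deriv cl Ax ?\<Gamma> Bot"
    by (rule deriv.ImpE)
qed

lemma deriv_neg_stable: "deriv cl Ax \<Gamma> (Neg (Neg (Neg \<phi>))) \<Longrightarrow> deriv cl Ax \<Gamma> (Neg \<phi>)"
  by (rule deriv.ImpI, rule deriv.ImpE[OF deriv_insert], assumption,
      rule deriv_dnegI, rule deriv_assumption)

lemma deriv_AllE_lifted: "deriv cl Ax \<Gamma> (All (liftf (Suc 0) \<phi>)) \<Longrightarrow> deriv cl Ax \<Gamma> \<phi>"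
  using deriv.AllE[where t = "Var 0"] by (metis substf_Var_liftf)

lemma deriv_ExI_lifted: "deriv cl Ax \<Gamma> \<phi> \<Longrightarrow> deriv cl Ax \<Gamma> (Ex (liftf (Suc 0) \<phi>))"
  using deriv.ExI[where t = "Var 0"] by (metis substf_Var_liftf)

lemma gg_refutes_cneg:
  "nnf \<phi> \<Longrightarrow> deriv cl Ax \<Gamma> (gg \<phi>) \<Longrightarrow> deriv cl Ax \<Gamma> (cneg \<phi>) \<Longrightarrow> deriv cl Ax \<Gamma> Bot"
proof (induction \<phi> arbitrary: \<Gamma>)
  case Bot then show ?case by simp
next
  case (Atom p ts) then show ?case by (simp add: deriv.ImpE)
next
  case (Imp \<phi> \<psi>)
  then obtain p ts where "\<phi> = Atom p ts" "\<psi> = Bot" using nnf_ImpD by blast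
  with Imp.prems show ?case by (simp add: deriv.ImpE deriv_dnegI)
next
  case (And \<phi> \<psi>)
  have gg: "deriv cl Ax \<Gamma> (gg \<phi>)" "deriv cl Ax \<Gamma> (gg \<psi>)"
    using And.prems(2) by (auto intro: deriv.AndE1 deriv.AndE2)
  have "deriv cl Ax (insert (cneg \<phi>) \<Gamma>) Bot"
    by (rule And.IH(1)) (use And.prems gg in \<open>auto intro: deriv_insert deriv_assumption\<close>)
  moreover have "deriv cl Ax (insert (cneg \<psi>) \<Gamma>) Bot"
    by (rule And.IH(2)) (use And.prems gg in \<open>auto intro: deriv_insert deriv_assumption\<close>)
  ultimately show ?case
    using And.prems(3) by (auto intro: deriv.OrE)
next
  case (Or \<phi> \<psi>)
  have cneg: "deriv cl Ax \<Gamma> (cneg \<phi>)" "deriv cl Ax \<Gamma> (cneg \<psi>)"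
    using Or.prems(3) by (auto intro: deriv.AndE1 deriv.AndE2)
  have "deriv cl Ax (insert (gg \<phi>) \<Gamma>) Bot"
    by (rule Or.IH(1)) (use Or.prems cneg in \<open>auto intro: deriv_insert deriv_assumption\<close>)
  moreover have "deriv cl Ax (insert (gg \<psi>) \<Gamma>) Bot"
    by (rule Or.IH(2)) (use Or.prems cneg in \<open>auto intro: deriv_insert deriv_assumption\<close>)
  ultimately show ?case
    using Or.prems(2) by (auto intro: deriv.ImpE deriv.AndI deriv.ImpI)
next
  case (All \<phi>)
  \<comment> \<open>The premise is moved into the context so that it survives the lifting done by ExE.\<close>
  let ?\<Gamma> = "insert (All (gg \<phi>)) \<Gamma>"
  have "deriv cl Ax (insert (cneg \<phi>) (liftf 0 ` ?\<Gamma>)) Bot"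
    by (rule All.IH) (use All.prems in \<open>auto intro: deriv_AllE_lifted deriv.Hyp deriv_assumption\<close>)
  then have "deriv cl Ax ?\<Gamma> Bot"
    using All.prems(3) by (auto intro: deriv.ExE deriv_insert)
  with All.prems(2) show ?case
    by (simp add: deriv_cut)
next
  case (Ex \<phi>)
  let ?\<Gamma> = "insert (All (cneg \<phi>)) \<Gamma>"
  have "deriv cl Ax (insert (gg \<phi>) (liftf 0 ` ?\<Gamma>)) Bot"
    by (rule Ex.IH) (use Ex.prems in \<open>auto intro: deriv_AllE_lifted deriv.Hyp deriv_assumption\<close>)
  then have "deriv cl Ax ?\<Gamma> (All (Neg (gg \<phi>)))"
    by (intro deriv.AllI deriv.ImpI)
  then have "deriv cl Ax ?\<Gamma> Bot"
    using Ex.prems(2) by (auto intro: deriv.ImpE deriv_insert)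
  with Ex.prems(3) show ?case
    by (simp add: deriv_cut)
qed

lemma gg_imp_awk: "nnf \<phi> \<Longrightarrow> deriv cl Ax \<Gamma> (Imp (gg \<phi>) (awk \<phi>))"
  unfolding awk_def
  by (intro deriv.ImpI gg_refutes_cneg) (auto intro: deriv.Hyp)

lemma gg_stable: "deriv cl Ax \<Gamma> (Neg (Neg (gg \<phi>))) \<Longrightarrow> deriv cl Ax \<Gamma> (gg \<phi>)"
proof (induction \<phi> arbitrary: \<Gamma>)
  case Bot
  then show ?case by (simp add: deriv.ImpE[OF _ deriv.ImpI[OF deriv_assumption]])
next
  case (Atom p ts) then show ?case by (simp add: deriv_neg_stable)
next
  case (Or \<phi> \<psi>) then show ?case by (simp add: deriv_neg_stable)
next
  case (Ex \<phi>) then show ?case by (simp add: deriv_neg_stable)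
next
  case (And \<phi> \<psi>)
  have dneg: "deriv cl Ax \<Gamma> (Neg (Neg (And (gg \<phi>) (gg \<psi>))))"
    using And.prems by simp
  have "deriv cl Ax \<Gamma> (gg \<phi>)"
    by (rule And.IH(1)[OF deriv_dneg_map[OF dneg deriv.ImpI[OF deriv.AndE1[OF deriv_assumption]]]])
  moreover have "deriv cl Ax \<Gamma> (gg \<psi>)"
    by (rule And.IH(2)[OF deriv_dneg_map[OF dneg deriv.ImpI[OF deriv.AndE2[OF deriv_assumption]]]])
  ultimately show ?case by (simp add: deriv.AndI)
next
  case (Imp \<phi> \<psi>)
  have "deriv cl Ax (insert (gg \<phi>) \<Gamma>) (Imp (Imp (gg \<phi>) (gg \<psi>)) (gg \<psi>))"
    by (rule deriv.ImpI, rule deriv.ImpE[OF deriv_assumption], rule deriv.Hyp) simp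
  then have "deriv cl Ax (insert (gg \<phi>) \<Gamma>) (Neg (Neg (gg \<psi>)))"
    using Imp.prems by (auto intro: deriv_dneg_map deriv_insert)
  then show ?case by (simp add: Imp.IH deriv.ImpI)
next
  case (All \<phi>)
  let ?\<Gamma> = "insert (Neg (Neg (All (gg \<phi>)))) \<Gamma>"
  have "deriv cl Ax (liftf 0 ` ?\<Gamma>) (Neg (Neg (gg \<phi>)))"
    by (rule deriv_dneg_map[OF deriv.Hyp deriv.ImpI[OF deriv_AllE_lifted[OF deriv_assumption]]]) simp
  then have "deriv cl Ax ?\<Gamma> (All (gg \<phi>))"
    by (simp add: All.IH deriv.AllI)
  with All.prems show ?case by (simp add: deriv_cut)
qed

lemma gg_arith_ax: "\<phi> \<in> arith_ax \<Longrightarrow> deriv cl arith_ax \<Gamma> (gg \<phi>)"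
proof (induction rule: arith_ax.induct)
  case (eq_subst t s \<phi>)
  let ?\<Gamma> = "insert (substf 0 t (gg \<phi>)) (insert (Neg (Neg (Eq t s))) \<Gamma>)"
  have "Imp (Eq t s) (Imp (substf 0 t (gg \<phi>)) (substf 0 s (gg \<phi>))) \<in> arith_ax"
    using eq_subst by (simp add: arith_ax.eq_subst wf_afm_gg)
  then have "deriv cl arith_ax (insert (Eq t s) ?\<Gamma>) (substf 0 s (gg \<phi>))"
    by (rule deriv.ImpE[OF deriv.ImpE[OF deriv.Axiom]]) (simp_all add: deriv.Hyp)
  then have "deriv cl arith_ax ?\<Gamma> (Neg (Neg (gg (substf 0 s \<phi>))))"
    by (auto simp: gg_substf intro: deriv_dneg_map deriv.ImpI deriv.Hyp)
  then have "deriv cl arith_ax ?\<Gamma> (substf 0 s (gg \<phi>))"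
    by (simp add: gg_stable flip: gg_substf)
  then show ?case
    by (simp add: gg_substf deriv.ImpI)
next
  case (suc_inj t s)
  then have "deriv cl arith_ax \<Gamma> (Imp (Eq (suc t) (suc s)) (Eq t s))"
    by (simp add: arith_ax.suc_inj deriv.Axiom)
  then show ?case
    by (auto intro: deriv.ImpI deriv_dneg_map deriv_assumption deriv_insert)
next
  case (induction \<phi>)
  then show ?case
    using deriv.Axiom[OF arith_ax.induction[OF wf_afm_gg]] by (simp add: gg_substf gg_liftf)
qed (simp_all add: deriv_dnegI deriv.Axiom arith_ax.intros)

lemma gg_OrE:
  assumes "deriv cl Ax \<Gamma> (gg (Or \<phi> \<psi>))"
    and "deriv cl Ax (insert (gg \<phi>) \<Gamma>) (gg \<chi>)" and "deriv cl Ax (insert (gg \<psi>) \<Gamma>) (gg \<chi>)"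
  shows "deriv cl Ax \<Gamma> (gg \<chi>)"
proof (rule gg_stable, rule deriv.ImpI)
  let ?\<Gamma> = "insert (Neg (gg \<chi>)) \<Gamma>"
  have "deriv cl Ax (insert (gg \<phi>) ?\<Gamma>) (gg \<chi>)"
    using assms(2) by (rule deriv_weaken) auto
  then have "deriv cl Ax ?\<Gamma> (Neg (gg \<phi>))"
    by (intro deriv.ImpI deriv_contra[where \<phi> = "gg \<chi>"]) simp_all
  moreover have "deriv cl Ax (insert (gg \<psi>) ?\<Gamma>) (gg \<chi>)"
    using assms(3) by (rule deriv_weaken) auto
  then have "deriv cl Ax ?\<Gamma> (Neg (gg \<psi>))"
    by (intro deriv.ImpI deriv_contra[where \<phi> = "gg \<chi>"]) simp_all
  ultimately show "deriv cl Ax ?\<Gamma> Bot"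
    by (intro deriv.ImpE[OF deriv_insert[OF assms(1)[unfolded gg.simps]]] deriv.AndI)
qed

lemma gg_ExE:
  assumes "deriv cl Ax \<Gamma> (gg (Ex \<phi>))"
    and "deriv cl Ax (insert (gg \<phi>) (liftf 0 ` \<Gamma>)) (liftf 0 (gg \<chi>))"
  shows "deriv cl Ax \<Gamma> (gg \<chi>)"
proof (rule gg_stable, rule deriv.ImpI)
  let ?\<Gamma> = "insert (Neg (gg \<chi>)) \<Gamma>"
  have "deriv cl Ax (insert (gg \<phi>) (liftf 0 ` ?\<Gamma>)) (liftf 0 (gg \<chi>))"
    using assms(2) by (rule deriv_weaken) auto
  then have "deriv cl Ax (insert (gg \<phi>) (liftf 0 ` ?\<Gamma>)) Bot"
    by (rule deriv_contra) simp
  then have "deriv cl Ax ?\<Gamma> (All (Neg (gg \<phi>)))"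
    by (intro deriv.AllI deriv.ImpI)
  then show "deriv cl Ax ?\<Gamma> Bot"
    by (rule deriv.ImpE[OF deriv_insert[OF assms(1)[unfolded gg.simps]]])
qed

lemma gg_sound:
  assumes gg_Ax: "\<And>\<psi> \<Delta>. \<psi> \<in> Ax \<Longrightarrow> deriv False Ax' \<Delta> (gg \<psi>)"
  shows "deriv cl Ax \<Gamma> \<phi> \<Longrightarrow> deriv False Ax' (gg ` \<Gamma>) (gg \<phi>)"
proof (induction rule: deriv.induct)
  case (Axiom \<phi> \<Gamma>) then show ?case by (rule gg_Ax)
next
  case (Hyp \<phi> \<Gamma>) then show ?case by (simp add: deriv.Hyp)
next
  case (AndI \<Gamma> \<phi> \<psi>) then show ?case by (simp add: deriv.AndI)
next
  case (AndE1 \<Gamma> \<phi> \<psi>) then show ?case by (simp add: deriv.AndE1)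
next
  case (AndE2 \<Gamma> \<phi> \<psi>) then show ?case by (simp add: deriv.AndE2)
next
  case (OrI1 \<Gamma> \<phi> \<psi>)
  show ?case unfolding gg.simps
    by (rule deriv.ImpI, rule deriv.ImpE[OF deriv.AndE1[OF deriv_assumption] deriv_insert[OF OrI1.IH]])
next
  case (OrI2 \<Gamma> \<psi> \<phi>)
  show ?case unfolding gg.simps
    by (rule deriv.ImpI, rule deriv.ImpE[OF deriv.AndE2[OF deriv_assumption] deriv_insert[OF OrI2.IH]])
next
  case (OrE \<Gamma> \<phi> \<psi> \<chi>)
  show ?case
    by (rule gg_OrE[where \<phi> = \<phi> and \<psi> = \<psi>]) (use OrE.IH in simp_all)
next
  case (ImpI \<phi> \<Gamma> \<psi>) then show ?case by (simp add: deriv.ImpI)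
next
  case (ImpE \<Gamma> \<phi> \<psi>) then show ?case by (simp add: deriv.ImpE)
next
  case (AllI \<Gamma> \<phi>) then show ?case by (simp add: image_image gg_liftf deriv.AllI)
next
  case (AllE \<Gamma> \<phi> t)
  then show ?case by (metis deriv.AllE gg.simps(6) gg_substf)
next
  case (ExI \<Gamma> t \<phi>)
  let ?\<Gamma> = "insert (All (Neg (gg \<phi>))) (gg ` \<Gamma>)"
  have "deriv False Ax' ?\<Gamma> (Neg (substf 0 t (gg \<phi>)))"
    using deriv.AllE[where t = t, OF deriv_assumption[where \<phi> = "All (Neg (gg \<phi>))"]] by simp
  moreover have "deriv False Ax' ?\<Gamma> (substf 0 t (gg \<phi>))"
    using deriv_insert[OF ExI.IH] by (simp add: gg_substf)
  ultimately have "deriv False Ax' ?\<Gamma> Bot"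
    by (rule deriv.ImpE)
  then show ?case by (simp add: deriv.ImpI)
next
  case (ExE \<Gamma> \<phi> \<psi>)
  show ?case
    by (rule gg_ExE[where \<phi> = \<phi>]) (use ExE.IH in \<open>simp_all add: image_image gg_liftf\<close>)
next
  case (DNE \<Gamma> \<phi>) then show ?case by (simp add: gg_stable)
qed

lemma PA_imp_HA'_gg: "PA \<phi> \<Longrightarrow> HA' (gg \<phi>)"
  unfolding PA_def HA'_def using gg_sound[OF gg_arith_ax] by fastforce

lemma neg_imp_cneg_classical: "nnf \<phi> \<Longrightarrow> deriv True Ax \<Gamma> (Neg \<phi>) \<Longrightarrow> deriv True Ax \<Gamma> (cneg \<phi>)"
proof (induction \<phi> arbitrary: \<Gamma>)
  case Bot then show ?case by simp
next
  case (Atom p ts) then show ?case by simp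
next
  case (Imp \<phi> \<psi>)
  then obtain p ts where literal: "\<phi> = Atom p ts" "\<psi> = Bot" using nnf_ImpD by blast
  with Imp.prems(2) have "deriv True Ax \<Gamma> (Neg (Neg (Atom p ts)))" by simp
  then have "deriv True Ax \<Gamma> (Atom p ts)" by (rule deriv.DNE[OF TrueI])
  with literal show ?case by simp
next
  case (And \<phi> \<psi>)
  let ?\<Gamma> = "insert (Neg (Or (cneg \<phi>) (cneg \<psi>))) \<Gamma>"
  have "deriv True Ax (insert (Neg \<phi>) ?\<Gamma>) (Or (cneg \<phi>) (cneg \<psi>))"
    by (intro deriv.OrI1 And.IH(1)) (use And.prems in \<open>simp_all add: deriv_assumption\<close>)
  then have "deriv True Ax ?\<Gamma> \<phi>"
    by (rule deriv_ccontr[OF deriv_contra]) simp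
  moreover have "deriv True Ax (insert (Neg \<psi>) ?\<Gamma>) (Or (cneg \<phi>) (cneg \<psi>))"
    by (intro deriv.OrI2 And.IH(2)) (use And.prems in \<open>simp_all add: deriv_assumption\<close>)
  then have "deriv True Ax ?\<Gamma> \<psi>"
    by (rule deriv_ccontr[OF deriv_contra]) simp
  ultimately have "deriv True Ax ?\<Gamma> Bot"
    by (intro deriv.ImpE[OF deriv_insert[OF And.prems(2)]] deriv.AndI)
  then show ?case by (simp add: deriv_ccontr)
next
  case (Or \<phi> \<psi>)
  have "deriv True Ax \<Gamma> (Neg \<phi>)"
    by (rule deriv.ImpI, rule deriv.ImpE[OF deriv_insert[OF Or.prems(2)] deriv.OrI1[OF deriv_assumption]])
  moreover have "deriv True Ax \<Gamma> (Neg \<psi>)"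
    by (rule deriv.ImpI, rule deriv.ImpE[OF deriv_insert[OF Or.prems(2)] deriv.OrI2[OF deriv_assumption]])
  ultimately show ?case
    using Or.prems(1) by (simp add: Or.IH deriv.AndI)
next
  case (All \<phi>)
  let ?\<Gamma> = "insert (Neg (Ex (cneg \<phi>))) \<Gamma>"
  have "deriv True Ax (insert (Neg \<phi>) (liftf 0 ` ?\<Gamma>)) (Ex (liftf (Suc 0) (cneg \<phi>)))"
    by (rule deriv_ExI_lifted, rule All.IH) (use All.prems in \<open>simp_all add: deriv_assumption\<close>)
  then have "deriv True Ax (liftf 0 ` ?\<Gamma>) \<phi>"
    by (rule deriv_ccontr[OF deriv_contra]) simp
  then have "deriv True Ax ?\<Gamma> Bot"
    by (rule deriv.ImpE[OF deriv_insert[OF All.prems(2)] deriv.AllI])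
  then show ?case by (simp add: deriv_ccontr)
next
  case (Ex \<phi>)
  let ?\<Gamma> = "insert (Neg (Ex \<phi>)) \<Gamma>"
  have "deriv True Ax (insert \<phi> (liftf 0 ` ?\<Gamma>)) (Ex (liftf (Suc 0) \<phi>))"
    by (rule deriv_ExI_lifted[OF deriv_assumption])
  then have "deriv True Ax (insert \<phi> (liftf 0 ` ?\<Gamma>)) Bot"
    by (rule deriv_contra) simp
  then have "deriv True Ax (liftf 0 ` ?\<Gamma>) (cneg \<phi>)"
    using Ex.prems(1) by (intro Ex.IH deriv.ImpI) simp
  then have "deriv True Ax ?\<Gamma> (cneg (Ex \<phi>))"
    by (simp add: deriv.AllI)
  with Ex.prems(2) show ?case by (rule deriv_cut)
qed

lemma awk_classical: "nnf \<phi> \<Longrightarrow> deriv True Ax \<Gamma> (awk \<phi>) \<Longrightarrow> deriv True Ax \<Gamma> \<phi>"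
  unfolding awk_def
  by (rule deriv_ccontr, rule deriv.ImpE[OF deriv_insert], assumption,
      rule neg_imp_cneg_classical, assumption, rule deriv_assumption)

theorem theorem4:
  shows "(\<forall>\<phi> :: ('f, 'p) fm. nnf \<phi> \<longrightarrow> minimal_provable (Imp (gg \<phi>) (awk \<phi>)))
       \<and> (\<forall>\<phi> :: afm. nnf \<phi> \<and> wf_afm \<phi> \<longrightarrow> (PA \<phi> \<longleftrightarrow> HA' (awk \<phi>)))"
proof (intro conjI allI impI)
  fix \<phi> :: "('f, 'p) fm"
  assume "nnf \<phi>"
  then show "minimal_provable (Imp (gg \<phi>) (awk \<phi>))" by (rule gg_imp_awk)
next
  fix \<phi> :: afm
  assume "nnf \<phi> \<and> wf_afm \<phi>"
  then have nnf: "nnf \<phi>" ..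
  show "PA \<phi> \<longleftrightarrow> HA' (awk \<phi>)"
  proof
    assume "PA \<phi>"
    then have "HA' (gg \<phi>)" by (rule PA_imp_HA'_gg)
    then show "HA' (awk \<phi>)"
      unfolding HA'_def by (rule deriv.ImpE[OF gg_imp_awk[OF nnf]])
  next
    assume "HA' (awk \<phi>)"
    then have "deriv True arith_ax {} (awk \<phi>)"
      unfolding HA'_def using deriv_mono by blast
    then show "PA \<phi>"
      unfolding PA_def by (rule awk_classical[OF nnf])
  qed
qed

end
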